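(* Let $G$ be a connected metrizable compact Hausdorff topological group acting on itself by left translation. Then $\mathbf{TC}_G(G)=\mathrm{cat}(G)$.
   Context: $\mathrm{cat}(X)$ denotes the (un-normalized) Lusternik–Schnirelmann category: the least $k$ such that $X$ is covered by $k$ open sets each of whose inclusions into $X$ is null-homotopic. Two $G$-maps are $G$-homotopic if there is a $G$-equivariant homotopy between them ($G$ acting trivially on $I=[0,1]$). For a $G$-map $p\colon E\to B$, $\mathrm{secat}_G(p)$ is the least $k$ such that $B$ is covered by $k$ $G$-invariant open sets $U_i$, each admitting a $G$-map $s\colon U_i\to E$ with $ps$ $G$-homotopic to the inclusion $U_i\hookrightarrow B$ ($\infty$ if none). For a $G$-space $X$, $\mathbf{TC}_G(X)=\mathrm{secat}_G(\pi)$ where $\pi\colon X^I\to X\times X$, $\pi(\gamma)=(\gamma(0),\gamma(1))$, $X^I$ has the compact-open topology and action $(g\gamma)(t)=g\gamma(t)$, and $X\times X$ has the diagonal action. *)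

theory Defs
  imports "HOL-Analysis.Analysis" "HOL-Algebra.Group" "HOL-Library.Extended_Nat" "HOL-Library.FuncSet"
begin

text \<open>Un-normalized Lusternik--Schnirelmann category: least k such that the space is
  covered by k open sets whose inclusions are null-homotopic (\<infinity> if none).\<close>
definition LS_cat :: "'a topology \<Rightarrow> enat" where
  "LS_cat X = Inf {enat k | k. \<exists>U :: nat \<Rightarrow> 'a set.
      (\<forall>i<k. openin X (U i) \<and>
         (\<exists>c. homotopic_with (\<lambda>h. True) (subtopology X (U i)) X id (\<lambda>x. c))) \<and>
      (\<Union>i<k. U i) = topspace X}"

definition topological_group :: "('a, 'b) monoid_scheme \<Rightarrow> 'a topology \<Rightarrow> bool" where
  "topological_group G T \<longleftrightarrow> group G \<and> carrier G = topspace T \<and>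
     continuous_map (prod_topology T T) T (\<lambda>(x, y). x \<otimes>\<^bsub>G\<^esub> y) \<and>
     continuous_map T T (\<lambda>x. inv\<^bsub>G\<^esub> x)"

definition compact_open_topology :: "'a topology \<Rightarrow> 'b topology \<Rightarrow> ('a \<Rightarrow> 'b) topology" where
  "compact_open_topology I X = topology_generated_by
     {{f. continuous_map I X f \<and> f \<in> extensional (topspace I) \<and> f ` K \<subseteq> V} | K V.
        compactin I K \<and> openin X V}"

definition path_space :: "'a topology \<Rightarrow> (real \<Rightarrow> 'a) topology" where
  "path_space X = compact_open_topology (top_of_set {0..1}) X"

definition secat_G ::
  "('g, 'm) monoid_scheme \<Rightarrow> 'e topology \<Rightarrow> 'b topology \<Rightarrow>
   ('g \<Rightarrow> 'e \<Rightarrow> 'e) \<Rightarrow> ('g \<Rightarrow> 'b \<Rightarrow> 'b) \<Rightarrow> ('e \<Rightarrow> 'b) \<Rightarrow> enat" where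
  "secat_G G E B aE aB p = Inf {enat k | k. \<exists>U :: nat \<Rightarrow> 'b set.
      (\<forall>i<k. openin B (U i) \<and>
         (\<forall>g\<in>carrier G. \<forall>x\<in>U i. aB g x \<in> U i) \<and>
         (\<exists>s. continuous_map (subtopology B (U i)) E s \<and>
              (\<forall>g\<in>carrier G. \<forall>x\<in>U i. s (aB g x) = aE g (s x)) \<and>
              homotopic_with (\<lambda>h. \<forall>g\<in>carrier G. \<forall>x\<in>U i. h (aB g x) = aB g (h x))
                 (subtopology B (U i)) B (p \<circ> s) id)) \<and>
      (\<Union>i<k. U i) = topspace B}"

definition TC_G ::
  "('g, 'm) monoid_scheme \<Rightarrow> 'a topology \<Rightarrow> ('g \<Rightarrow> 'a \<Rightarrow> 'a) \<Rightarrow> enat" where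
  "TC_G G X a = secat_G G (path_space X) (prod_topology X X)
      (\<lambda>g \<gamma>. restrict (\<lambda>t. a g (\<gamma> t)) {0..1})
      (\<lambda>g (x, y). (a g x, a g y))
      (\<lambda>\<gamma>. (\<gamma> 0, \<gamma> 1))"

end

theory Submission
  imports Defs
begin

text \<open>
  Let \<open>V\<close> be an open set of \<open>G\<close> deformed in \<open>G\<close> by \<open>H\<close> to a point \<open>c\<close>.
  The pairs \<open>(x, y)\<close> with \<open>x\<inverse>y \<in> V\<close> form an open set invariant under left
  translation, on which \<open>(x, y) \<mapsto> (t \<mapsto> x H(1 - t, x\<inverse>y))\<close> is an equivariant
  path from \<open>xc\<close> to \<open>y\<close>; sliding \<open>xc\<close> back to \<open>x\<close> along a path from \<open>c\<close> to \<open>1\<close>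
  is an equivariant homotopy of its endpoint map to the identity. The path exists because a
  connected space covered by open sets that are null-homotopic in it is path connected.

  Conversely, if \<open>s\<close> is a motion planner on an open set \<open>U\<close>, then on \<open>{y. (1, y) \<in> U}\<close>
  the identity is homotopic to \<open>y \<mapsto> s(1, y)(1)\<close>, hence along the paths to
  \<open>y \<mapsto> s(1, y)(0)\<close>, hence to the constant \<open>1\<close>.
\<close>

section \<open>Paths in the compact-open topology\<close>

lemma topspace_path_space:
  "topspace (path_space X) = {\<gamma>. continuous_map (top_of_set {0..1}) X \<gamma> \<and> \<gamma> \<in> extensional {0..1}}"
  by (auto simp: path_space_def compact_open_topology_def)

lemma openin_path_space_subbasic:
  assumes "compactin (top_of_set {0..1}) K" and "openin X V"
  shows "openin (path_space X) {\<gamma> \<in> topspace (path_space X). \<gamma> ` K \<subseteq> V}"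
proof -
  have "{\<gamma> \<in> topspace (path_space X). \<gamma> ` K \<subseteq> V} =
      {\<gamma>. continuous_map (top_of_set {0..1}) X \<gamma> \<and>
           \<gamma> \<in> extensional (topspace (top_of_set {0..1})) \<and> \<gamma> ` K \<subseteq> V}"
    by (auto simp: topspace_path_space)
  also have "openin (path_space X) \<dots>"
    unfolding path_space_def compact_open_topology_def
    by (rule topology_generated_by_Basis) (use assms in blast)
  finally show ?thesis .
qed

lemma continuous_map_into_path_space:
  assumes "\<And>z. z \<in> topspace Z \<Longrightarrow> f z \<in> topspace (path_space X)"
    and "\<And>K V. compactin (top_of_set {0..1}) K \<Longrightarrow> openin X V \<Longrightarrow>
           openin Z {z \<in> topspace Z. f z ` K \<subseteq> V}"
  shows "continuous_map Z (path_space X) f"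
proof -
  have "openin Z (f -` {\<gamma>. continuous_map (top_of_set {0..1}) X \<gamma> \<and>
                           \<gamma> \<in> extensional (topspace (top_of_set {0..1})) \<and> \<gamma> ` K \<subseteq> V} \<inter> topspace Z)"
    if "compactin (top_of_set {0..1}) K" and "openin X V" for K V
  proof -
    have "f -` {\<gamma>. continuous_map (top_of_set {0..1}) X \<gamma> \<and>
                  \<gamma> \<in> extensional (topspace (top_of_set {0..1})) \<and> \<gamma> ` K \<subseteq> V} \<inter> topspace Z =
        {z \<in> topspace Z. f z ` K \<subseteq> V}"
      using assms(1) by (auto simp: topspace_path_space)
    with assms(2)[OF that] show ?thesis by simp
  qed
  then show ?thesis
    unfolding path_space_def compact_open_topology_def
    by (intro continuous_on_generated_topo)
       (use assms(1) in \<open>auto simp: path_space_def compact_open_topology_def\<close>)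
qed

lemma openin_tube:
  assumes W: "openin (prod_topology X Y) W" and K: "compactin Y K"
  shows "openin X {x \<in> topspace X. {x} \<times> K \<subseteq> W}"
proof (subst openin_subopen, intro ballI)
  fix x assume "x \<in> {x \<in> topspace X. {x} \<times> K \<subseteq> W}"
  then have "x \<in> topspace X" and "{x} \<times> K \<subseteq> W" by auto
  from tube_lemma_right[OF W K this]
  obtain U V where U: "openin X U" "x \<in> U" and "K \<subseteq> V" "U \<times> V \<subseteq> W"
    by blast
  then have "U \<subseteq> {x \<in> topspace X. {x} \<times> K \<subseteq> W}"
    using openin_subset[OF U(1)] by blast
  with U show "\<exists>T. openin X T \<and> x \<in> T \<and> T \<subseteq> {x \<in> topspace X. {x} \<times> K \<subseteq> W}"
    by blast
qed

lemma continuous_map_path_space_curry: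
  assumes F: "continuous_map (prod_topology Z (top_of_set {0..1})) X F"
  shows "continuous_map Z (path_space X) (\<lambda>z. \<lambda>t\<in>{0..1}. F (z, t))"
proof (rule continuous_map_into_path_space)
  fix z assume z: "z \<in> topspace Z"
  have "continuous_map (top_of_set {0..1}) (prod_topology Z (top_of_set {0..1})) (\<lambda>t. (z, t))"
    by (intro continuous_map_pairedI) (simp_all add: z)
  from continuous_map_compose[OF this F]
  have "continuous_map (top_of_set {0..1}) X (\<lambda>t. F (z, t))"
    by (simp add: o_def)
  then have "continuous_map (top_of_set {0..1}) X (\<lambda>t\<in>{0..1}. F (z, t))"
    by (rule continuous_map_eq) auto
  then show "(\<lambda>t\<in>{0..1}. F (z, t)) \<in> topspace (path_space X)"
    by (simp add: topspace_path_space)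
next
  fix K :: "real set" and V assume K: "compactin (top_of_set {0..1}) K" and V: "openin X V"
  have "K \<subseteq> {0..1}"
    using compactin_subset_topspace[OF K] by simp
  then have "{z \<in> topspace Z. (\<lambda>t\<in>{0..1}. F (z, t)) ` K \<subseteq> V} =
      {z \<in> topspace Z. {z} \<times> K \<subseteq> {p \<in> topspace (prod_topology Z (top_of_set {0..1})). F p \<in> V}}"
    by (fastforce simp: image_subset_iff)
  also have "openin Z \<dots>"
    by (rule openin_tube[OF openin_continuous_map_preimage[OF F V] K])
  finally show "openin Z {z \<in> topspace Z. (\<lambda>t\<in>{0..1}. F (z, t)) ` K \<subseteq> V}" .
qed

lemma continuous_map_path_space_eval:
  "continuous_map (prod_topology (path_space X) (top_of_set {0..1})) X (\<lambda>(\<gamma>, t). \<gamma> t)"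
proof -
  let ?P = "prod_topology (path_space X) (top_of_set {0..1::real})"
  have nbhd: "\<exists>N. openin ?P N \<and> p \<in> N \<and> N \<subseteq> {p \<in> topspace ?P. (\<lambda>(\<gamma>, t). \<gamma> t) p \<in> V}"
    if V: "openin X V" and p: "p \<in> {p \<in> topspace ?P. (\<lambda>(\<gamma>, t). \<gamma> t) p \<in> V}" for V p
  proof -
    obtain \<gamma> t where p_eq: "p = (\<gamma>, t)" by fastforce
    have \<gamma>: "\<gamma> \<in> topspace (path_space X)" and t: "t \<in> {0..1}" and "\<gamma> t \<in> V"
      using p by (auto simp: p_eq)
    have "continuous_map (top_of_set {0..1}) X \<gamma>"
      using \<gamma> by (simp add: topspace_path_space)
    from openin_continuous_map_preimage[OF this V]
    have "openin (top_of_set {0..1}) {s \<in> {0..1}. \<gamma> s \<in> V}"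
      by simp
    then obtain e where "e > 0" and e: "\<And>s. s \<in> {0..1} \<Longrightarrow> dist s t < e \<Longrightarrow> \<gamma> s \<in> V"
      using t \<open>\<gamma> t \<in> V\<close> unfolding openin_euclidean_subtopology_iff by blast
    define K where "K = cball t (e/2) \<inter> {0..1}"
    define N where "N = {\<delta> \<in> topspace (path_space X). \<delta> ` K \<subseteq> V} \<times> ({0..1} \<inter> ball t (e/2))"
    have "compactin (top_of_set {0..1}) K"
      by (simp add: K_def compactin_subtopology compact_Int_closed)
    then have "openin ?P N"
      unfolding N_def openin_prod_Times_iff using openin_path_space_subbasic[OF _ V] by blast
    moreover have "\<gamma> ` K \<subseteq> V"
      using e \<open>e > 0\<close> by (auto simp: K_def dist_commute)
    then have "p \<in> N"
      using \<gamma> t \<open>e > 0\<close> by (simp add: N_def p_eq)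
    moreover have "N \<subseteq> {p \<in> topspace ?P. (\<lambda>(\<gamma>, t). \<gamma> t) p \<in> V}"
      by (fastforce simp: N_def K_def image_subset_iff)
    ultimately show ?thesis by blast
  qed
  show ?thesis
    unfolding continuous_map_def
  proof (intro conjI allI impI)
    show "(\<lambda>(\<gamma>, t). \<gamma> t) \<in> topspace ?P \<rightarrow> topspace X"
      by (auto simp: topspace_path_space continuous_map_def Pi_iff)
    fix V assume "openin X V"
    then show "openin ?P {p \<in> topspace ?P. (\<lambda>(\<gamma>, t). \<gamma> t) p \<in> V}"
      using nbhd by (subst openin_subopen) blast
  qed
qed

lemma homotopic_path_space_endpoints:
  assumes "continuous_map Z (path_space X) f"
  shows "homotopic_with (\<lambda>h. True) Z X (\<lambda>z. f z 0) (\<lambda>z. f z 1)"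
  unfolding homotopic_with_def
proof (intro exI conjI)
  have "continuous_map (prod_topology (top_of_set {0..1}) Z) (prod_topology (path_space X) (top_of_set {0..1}))
          (\<lambda>(t, z). (f z, t))"
    using continuous_map_pairedI[OF continuous_map_compose[OF continuous_map_snd assms] continuous_map_fst]
    by (simp add: o_def case_prod_beta')
  from continuous_map_compose[OF this continuous_map_path_space_eval]
  show "continuous_map (prod_topology (top_of_set {0..1}) Z) X (\<lambda>(t, z). f z t)"
    by (simp add: o_def case_prod_beta')
qed auto

section \<open>Categorical open sets\<close>

definition categorical_open :: "'a topology \<Rightarrow> 'a set \<Rightarrow> bool" where
  "categorical_open X V \<longleftrightarrow>
     openin X V \<and> (\<exists>c. homotopic_with (\<lambda>h. True) (subtopology X V) X id (\<lambda>x. c))"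

lemma LS_cat_eq_Inf_categorical_covers:
  "LS_cat X = Inf {enat k |k. \<exists>V. (\<forall>i<k. categorical_open X (V i)) \<and> (\<Union>i<k. V i) = topspace X}"
  by (simp add: LS_cat_def categorical_open_def)

lemma path_component_of_nullhomotopic:
  assumes "homotopic_with P (subtopology X V) X id (\<lambda>x. c)" and "v \<in> topspace X \<inter> V"
  shows "path_component_of X v c"
proof -
  obtain h where h: "continuous_map (prod_topology (top_of_set {0..1::real}) (subtopology X V)) X h"
    and h0: "\<forall>x. h (0, x) = x" and h1: "\<forall>x. h (1, x) = c"
    using assms(1) by (auto simp: homotopic_with_def)
  have "continuous_map (top_of_set {0..1}) (prod_topology (top_of_set {0..1}) (subtopology X V)) (\<lambda>t. (t, v))"
    using assms(2) by (intro continuous_map_pairedI) simp_all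
  from continuous_map_compose[OF this h] have "pathin X (\<lambda>t. h (t, v))"
    by (simp add: pathin_def o_def)
  with h0 h1 show ?thesis
    unfolding path_component_of_def by blast
qed

lemma categorical_open_obtains_const_in_topspace:
  assumes "categorical_open X V" and "topspace X \<noteq> {}"
  obtains c where "c \<in> topspace X" and "homotopic_with (\<lambda>h. True) (subtopology X V) X id (\<lambda>x. c)"
proof (cases "V = {}")
  case True
  obtain c where "c \<in> topspace X" using assms(2) by blast
  moreover have "homotopic_with (\<lambda>h. True) (subtopology X V) X id (\<lambda>x. c)"
    by (rule homotopic_with_equal) (simp_all add: True)
  ultimately show ?thesis using that by blast
next
  case False
  then obtain v where "v \<in> V" by blast
  obtain c where c: "homotopic_with (\<lambda>h. True) (subtopology X V) X id (\<lambda>x. c)"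
    using assms(1) by (auto simp: categorical_open_def)
  have "v \<in> topspace X"
    using \<open>v \<in> V\<close> assms(1) openin_subset by (auto simp: categorical_open_def)
  with c \<open>v \<in> V\<close> have "path_component_of X v c"
    by (intro path_component_of_nullhomotopic) auto
  then have "c \<in> topspace X"
    by (simp add: path_component_of_equiv)
  with c that show ?thesis by blast
qed

lemma path_connected_space_if_open_path_components:
  assumes "connected_space X" and "\<And>x. x \<in> topspace X \<Longrightarrow> openin X (path_component_of_set X x)"
  shows "path_connected_space X"
proof -
  have "topspace X \<subseteq> path_component_of_set X x" if x: "x \<in> topspace X" for x
  proof -
    have "path_component_of_set X x \<in> path_components_of X"
      using x by (simp add: path_component_in_path_components_of)
    moreover have "openin X (\<Union>(path_components_of X - {path_component_of_set X x}))"
      using assms(2) by (intro openin_Union) (auto simp: path_components_of_def)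
    ultimately have "openin X (topspace X - path_component_of_set X x)"
      by (simp add: complement_path_components_of_Union)
    then have "closedin X (path_component_of_set X x)"
      by (simp add: closedin_def path_component_of_subset_topspace)
    moreover have "path_component_of_set X x \<noteq> {}"
      using x by (subst path_component_of_eq_empty) simp
    ultimately show ?thesis
      using assms(1) assms(2)[OF x] unfolding connected_space_clopen_in by blast
  qed
  then show ?thesis
    unfolding path_connected_space_iff_path_component by blast
qed

lemma path_connected_space_if_categorical_cover:
  assumes "connected_space X"
    and "\<forall>i<k. categorical_open X (V i)" and "(\<Union>i<k. V i) = topspace X"
  shows "path_connected_space X"
proof (rule path_connected_space_if_open_path_components[OF assms(1)])
  fix x assume "x \<in> topspace X"
  show "openin X (path_component_of_set X x)"
  proof (subst openin_subopen, intro ballI)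
    fix y assume y: "y \<in> path_component_of_set X x"
    then have "y \<in> topspace X"
      by (simp add: path_component_of_equiv)
    then obtain i where i: "i < k" "y \<in> V i"
      using assms(3) by blast
    then obtain c where V: "openin X (V i)"
      and c: "homotopic_with (\<lambda>h. True) (subtopology X (V i)) X id (\<lambda>x. c)"
      using assms(2) unfolding categorical_open_def by blast
    have "V i \<subseteq> topspace X"
      by (rule openin_subset[OF V])
    then have "path_component_of X u c" if "u \<in> V i" for u
      using that by (intro path_component_of_nullhomotopic[OF c]) auto
    then have "path_component_of X x v" if "v \<in> V i" for v
      using y i(2) that
      by (metis mem_Collect_eq path_component_of_sym path_component_of_trans)
    then have "V i \<subseteq> path_component_of_set X x"
      by blast
    with V i show "\<exists>T. openin X T \<and> y \<in> T \<and> T \<subseteq> path_component_of_set X x"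
      by blast
  qed
qed

section \<open>Equivariant motion planners\<close>

definition equivariant_sectional_open ::
  "('g, 'm) monoid_scheme \<Rightarrow> 'e topology \<Rightarrow> 'b topology \<Rightarrow>
   ('g \<Rightarrow> 'e \<Rightarrow> 'e) \<Rightarrow> ('g \<Rightarrow> 'b \<Rightarrow> 'b) \<Rightarrow> ('e \<Rightarrow> 'b) \<Rightarrow> 'b set \<Rightarrow> bool" where
  "equivariant_sectional_open G E B aE aB p U \<longleftrightarrow>
     openin B U \<and> (\<forall>g\<in>carrier G. \<forall>x\<in>U. aB g x \<in> U) \<and>
     (\<exists>s. continuous_map (subtopology B U) E s \<and>
          (\<forall>g\<in>carrier G. \<forall>x\<in>U. s (aB g x) = aE g (s x)) \<and>
          homotopic_with (\<lambda>h. \<forall>g\<in>carrier G. \<forall>x\<in>U. h (aB g x) = aB g (h x))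
            (subtopology B U) B (p \<circ> s) id)"

lemma secat_G_eq_Inf_sectional_covers:
  "secat_G G E B aE aB p =
     Inf {enat k |k. \<exists>U. (\<forall>i<k. equivariant_sectional_open G E B aE aB p (U i)) \<and>
                          (\<Union>i<k. U i) = topspace B}"
  by (simp add: secat_G_def equivariant_sectional_open_def)

lemma nullhomotopic_slice_of_section:
  assumes s: "continuous_map (subtopology (prod_topology X X) U) (path_space X) s"
    and hs: "homotopic_with P (subtopology (prod_topology X X) U) (prod_topology X X)
               ((\<lambda>\<gamma>. (\<gamma> 0, \<gamma> 1)) \<circ> s) id"
    and e: "e \<in> topspace X"
  shows "homotopic_with (\<lambda>h. True) (subtopology X {y \<in> topspace X. (e, y) \<in> U}) X id (\<lambda>y. e)"
proof -
  let ?S = "subtopology X {y \<in> topspace X. (e, y) \<in> U}"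
  have "continuous_map ?S (prod_topology X X) (\<lambda>y. (e, y))"
    using e by (intro continuous_map_pairedI) (simp_all add: continuous_map_from_subtopology)
  then have j: "continuous_map ?S (subtopology (prod_topology X X) U) (\<lambda>y. (e, y))"
    by (auto simp: continuous_map_in_subtopology)
  have "homotopic_with (\<lambda>h. True) ?S (prod_topology X X) (\<lambda>y. (s (e, y) 0, s (e, y) 1)) (\<lambda>y. (e, y))"
    using homotopic_with_compose_continuous_map_right[OF homotopic_with_mono[OF hs] j]
    by (simp add: o_def)
  from homotopic_with_compose_continuous_map_left[OF this continuous_map_fst]
    homotopic_with_compose_continuous_map_left[OF this continuous_map_snd]
  have start: "homotopic_with (\<lambda>h. True) ?S X (\<lambda>y. s (e, y) 0) (\<lambda>y. e)"
    and finish: "homotopic_with (\<lambda>h. True) ?S X (\<lambda>y. s (e, y) 1) id"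
    by (simp_all add: o_def id_def)
  have along: "homotopic_with (\<lambda>h. True) ?S X (\<lambda>y. s (e, y) 1) (\<lambda>y. s (e, y) 0)"
    using homotopic_path_space_endpoints[OF continuous_map_compose[OF j s]]
    by (simp add: o_def homotopic_with_sym)
  have "homotopic_with (\<lambda>h. True) ?S X id (\<lambda>y. s (e, y) 1)"
    using finish by (simp add: homotopic_with_sym)
  from homotopic_with_trans[OF homotopic_with_trans[OF this along] start] show ?thesis .
qed

lemma categorical_open_slice:
  assumes "equivariant_sectional_open G (path_space X) (prod_topology X X) aE aB (\<lambda>\<gamma>. (\<gamma> 0, \<gamma> 1)) U"
    and e: "e \<in> topspace X"
  shows "categorical_open X {y \<in> topspace X. (e, y) \<in> U}"
proof -
  have "continuous_map X (prod_topology X X) (\<lambda>y. (e, y))"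
    using e by (intro continuous_map_pairedI) simp_all
  from openin_continuous_map_preimage[OF this]
  have "openin X {y \<in> topspace X. (e, y) \<in> U}"
    using assms(1) by (simp add: equivariant_sectional_open_def)
  moreover obtain s where s:
    "continuous_map (subtopology (prod_topology X X) U) (path_space X) s"
    "homotopic_with (\<lambda>h. \<forall>g\<in>carrier G. \<forall>x\<in>U. h (aB g x) = aB g (h x))
       (subtopology (prod_topology X X) U) (prod_topology X X) ((\<lambda>\<gamma>. (\<gamma> 0, \<gamma> 1)) \<circ> s) id"
    using assms(1) unfolding equivariant_sectional_open_def by blast
  ultimately show ?thesis
    unfolding categorical_open_def using nullhomotopic_slice_of_section[OF s e] by blast
qed

lemma categorical_cover_of_sectional_cover:
  assumes "\<forall>i<k. equivariant_sectional_open G (path_space X) (prod_topology X X) aE aB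
                   (\<lambda>\<gamma>. (\<gamma> 0, \<gamma> 1)) (U i)"
    and "(\<Union>i<k. U i) = topspace (prod_topology X X)" and "e \<in> topspace X"
  shows "\<exists>V. (\<forall>i<k. categorical_open X (V i)) \<and> (\<Union>i<k. V i) = topspace X"
proof (intro exI conjI)
  show "\<forall>i<k. categorical_open X {y \<in> topspace X. (e, y) \<in> U i}"
    by (intro allI impI categorical_open_slice[OF _ assms(3)]) (use assms(1) in blast)
  show "(\<Union>i<k. {y \<in> topspace X. (e, y) \<in> U i}) = topspace X"
    using assms(2,3) by auto
qed

section \<open>Left translation in a topological group\<close>

lemma (in group) inv_mult_translate:
  "\<lbrakk>g \<in> carrier G; x \<in> carrier G; y \<in> carrier G\<rbrakk> \<Longrightarrow> inv (g \<otimes> x) \<otimes> (g \<otimes> y) = inv x \<otimes> y"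
  by (simp add: inv_mult_group m_assoc[symmetric]) (simp add: m_assoc)

lemma topological_group_one_in_topspace: "topological_group G T \<Longrightarrow> \<one>\<^bsub>G\<^esub> \<in> topspace T"
  unfolding topological_group_def using monoid.one_closed[OF group.is_monoid] by blast

lemma continuous_map_topological_group_mult:
  assumes "topological_group G T" and "continuous_map X T f" and "continuous_map X T g"
  shows "continuous_map X T (\<lambda>x. f x \<otimes>\<^bsub>G\<^esub> g x)"
proof -
  have "continuous_map (prod_topology T T) T (\<lambda>(x, y). x \<otimes>\<^bsub>G\<^esub> y)"
    using assms(1) by (simp add: topological_group_def)
  from continuous_map_compose[OF continuous_map_pairedI[OF assms(2,3)] this] show ?thesis
    by (simp add: o_def)
qed

lemma continuous_map_topological_group_inv:
  assumes "topological_group G T" and "continuous_map X T f"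
  shows "continuous_map X T (\<lambda>x. inv\<^bsub>G\<^esub> f x)"
proof -
  have "continuous_map T T (\<lambda>x. inv\<^bsub>G\<^esub> x)"
    using assms(1) by (simp add: topological_group_def)
  from continuous_map_compose[OF assms(2) this] show ?thesis
    by (simp add: o_def)
qed

abbreviation left_equivariant_planning_open ::
    "('a, 'b) monoid_scheme \<Rightarrow> 'a topology \<Rightarrow> ('a \<times> 'a) set \<Rightarrow> bool" where
  "left_equivariant_planning_open G T \<equiv>
     equivariant_sectional_open G (path_space T) (prod_topology T T)
       (\<lambda>g \<gamma>. \<lambda>t\<in>{0..1}. g \<otimes>\<^bsub>G\<^esub> \<gamma> t) (\<lambda>g (x, y). (g \<otimes>\<^bsub>G\<^esub> x, g \<otimes>\<^bsub>G\<^esub> y))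
       (\<lambda>\<gamma>. (\<gamma> 0, \<gamma> 1))"

definition left_difference_preimage ::
    "('a, 'b) monoid_scheme \<Rightarrow> 'a topology \<Rightarrow> 'a set \<Rightarrow> ('a \<times> 'a) set" where
  "left_difference_preimage G T V =
     {(x, y) \<in> topspace T \<times> topspace T. inv\<^bsub>G\<^esub> x \<otimes>\<^bsub>G\<^esub> y \<in> V}"

locale contraction_in_topological_group =
  fixes G (structure) and T :: "'a topology" and V :: "'a set" and c :: 'a
    and h :: "real \<times> 'a \<Rightarrow> 'a"
  assumes topological_group: "topological_group G T"
    and openin_V: "openin T V"
    and continuous_h: "continuous_map (prod_topology (top_of_set {0..1}) (subtopology T V)) T h"
    and h_0: "\<And>v. h (0, v) = v" and h_1: "\<And>v. h (1, v) = c"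
begin

sublocale group G
  using topological_group by (simp add: topological_group_def)

lemma carrier_eq: "carrier G = topspace T"
  using topological_group by (simp add: topological_group_def)

lemma h_in_carrier: "t \<in> {0..1} \<Longrightarrow> v \<in> V \<Longrightarrow> h (t, v) \<in> carrier G"
  using continuous_map_funspace[OF continuous_h] openin_subset[OF openin_V]
  by (auto simp: carrier_eq Pi_iff)

lemma mem_left_difference_preimage:
  "(x, y) \<in> left_difference_preimage G T V \<longleftrightarrow> x \<in> carrier G \<and> y \<in> carrier G \<and> inv x \<otimes> y \<in> V"
  by (auto simp: left_difference_preimage_def carrier_eq)

lemma continuous_map_left_difference:
  "continuous_map (prod_topology T T) T (\<lambda>z. inv (fst z) \<otimes> snd z)"
  by (intro continuous_map_topological_group_mult[OF topological_group]
      continuous_map_topological_group_inv[OF topological_group] continuous_map_fst continuous_map_snd)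

lemma openin_left_difference_preimage: "openin (prod_topology T T) (left_difference_preimage G T V)"
proof -
  have "left_difference_preimage G T V =
      {z \<in> topspace (prod_topology T T). inv (fst z) \<otimes> snd z \<in> V}"
    by (auto simp: left_difference_preimage_def)
  then show ?thesis
    using openin_continuous_map_preimage[OF continuous_map_left_difference openin_V] by simp
qed

lemma left_difference_preimage_translate:
  "g \<in> carrier G \<Longrightarrow> (x, y) \<in> left_difference_preimage G T V \<Longrightarrow>
   (g \<otimes> x, g \<otimes> y) \<in> left_difference_preimage G T V"
  by (simp add: mem_left_difference_preimage inv_mult_translate)

text \<open>The planner joins \<open>xc\<close>, not \<open>x\<close>, to \<open>y\<close>: it is a section only up to homotopy.\<close>

definition planner :: "'a \<times> 'a \<Rightarrow> real \<Rightarrow> 'a" where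
  "planner = (\<lambda>(x, y). \<lambda>t\<in>{0..1}. x \<otimes> h (1 - t, inv x \<otimes> y))"

lemma planner_endpoints:
  assumes "(x, y) \<in> left_difference_preimage G T V"
  shows "planner (x, y) 0 = x \<otimes> c" and "planner (x, y) 1 = y"
  using assms by (simp_all add: planner_def mem_left_difference_preimage h_0 h_1 m_assoc[symmetric])

lemma planner_translate:
  assumes "g \<in> carrier G" and "(x, y) \<in> left_difference_preimage G T V"
  shows "planner (g \<otimes> x, g \<otimes> y) = (\<lambda>t\<in>{0..1}. g \<otimes> planner (x, y) t)"
proof -
  have "(g \<otimes> x) \<otimes> h (1 - t, inv (g \<otimes> x) \<otimes> (g \<otimes> y)) = g \<otimes> (x \<otimes> h (1 - t, inv x \<otimes> y))"
    if "t \<in> {0..1}" for t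
    using assms that by (simp add: mem_left_difference_preimage inv_mult_translate m_assoc h_in_carrier)
  then show ?thesis
    by (auto simp: planner_def intro!: restrict_ext)
qed

lemma continuous_map_planner:
  "continuous_map (subtopology (prod_topology T T) (left_difference_preimage G T V)) (path_space T) planner"
proof -
  let ?U = "subtopology (prod_topology T T) (left_difference_preimage G T V)"
  let ?Z = "prod_topology ?U (top_of_set {0..1::real})"
  have difference: "continuous_map ?U (subtopology T V) (\<lambda>z. inv (fst z) \<otimes> snd z)"
    unfolding continuous_map_in_subtopology
    using continuous_map_from_subtopology[OF continuous_map_left_difference]
    by (auto simp: left_difference_preimage_def)
  have "continuous_map (top_of_set {0..1}) (top_of_set {0..1::real}) (\<lambda>t. 1 - t)"
    by (auto intro!: continuous_intros)
  from continuous_map_pairedI[OF continuous_map_compose[OF continuous_map_snd this]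
      continuous_map_compose[OF continuous_map_fst difference]]
  have "continuous_map ?Z (prod_topology (top_of_set {0..1}) (subtopology T V))
          (\<lambda>p. (1 - snd p, inv (fst (fst p)) \<otimes> snd (fst p)))"
    by (simp add: o_def)
  from continuous_map_compose[OF this continuous_h]
  have "continuous_map ?Z T (\<lambda>p. h (1 - snd p, inv (fst (fst p)) \<otimes> snd (fst p)))"
    by (simp add: o_def)
  moreover have "continuous_map ?Z T (\<lambda>p. fst (fst p))"
    using continuous_map_compose[OF continuous_map_fst continuous_map_from_subtopology[OF continuous_map_fst]]
    by (simp add: o_def)
  ultimately have "continuous_map ?Z T (\<lambda>p. fst (fst p) \<otimes> h (1 - snd p, inv (fst (fst p)) \<otimes> snd (fst p)))"
    by (rule continuous_map_topological_group_mult[OF topological_group, rotated])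
  from continuous_map_path_space_curry[OF this] show ?thesis
    by (simp add: planner_def case_prod_beta')
qed

lemma homotopic_planner_endpoints_id:
  assumes \<omega>: "pathin T \<omega>" and "\<omega> 0 = c" and "\<omega> 1 = \<one>"
  shows "homotopic_with
           (\<lambda>k. \<forall>g\<in>carrier G. \<forall>z\<in>left_difference_preimage G T V.
                  k (case z of (x, y) \<Rightarrow> (g \<otimes> x, g \<otimes> y)) = (case k z of (x, y) \<Rightarrow> (g \<otimes> x, g \<otimes> y)))
           (subtopology (prod_topology T T) (left_difference_preimage G T V)) (prod_topology T T)
           ((\<lambda>\<gamma>. (\<gamma> 0, \<gamma> 1)) \<circ> planner) id"
    (is "homotopic_with ?Q ?U _ _ _")
proof -
  define K where "K = (\<lambda>p :: real \<times> 'a \<times> 'a. (fst (snd p) \<otimes> \<omega> (fst p), snd (snd p)))"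
  have \<omega>_carrier: "\<omega> \<tau> \<in> carrier G" if "\<tau> \<in> {0..1}" for \<tau>
    using continuous_map_funspace[OF \<omega>[unfolded pathin_def]] that by (auto simp: carrier_eq)
  have "continuous_map (prod_topology (top_of_set {0..1}) ?U) T (\<lambda>p. fst (snd p) \<otimes> \<omega> (fst p))"
    using continuous_map_compose[OF continuous_map_snd continuous_map_from_subtopology[OF continuous_map_fst]]
      continuous_map_compose[OF continuous_map_fst \<omega>[unfolded pathin_def]]
    by (intro continuous_map_topological_group_mult[OF topological_group]) (simp_all add: o_def)
  moreover have "continuous_map (prod_topology (top_of_set {0..1}) ?U) T (\<lambda>p. snd (snd p))"
    using continuous_map_compose[OF continuous_map_snd continuous_map_from_subtopology[OF continuous_map_snd]]
    by (simp add: o_def)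
  ultimately have "continuous_map (prod_topology (top_of_set {0..1}) ?U) (prod_topology T T) K"
    unfolding K_def by (rule continuous_map_pairedI)
  then have homotopy: "homotopic_with ?Q ?U (prod_topology T T) (\<lambda>z. K (0, z)) (\<lambda>z. K (1, z))"
    unfolding homotopic_with_def
    by (intro exI[of _ K] conjI)
       (auto simp: K_def m_assoc \<omega>_carrier mem_left_difference_preimage)
  have topspace_U: "topspace ?U = left_difference_preimage G T V"
    by (auto simp: left_difference_preimage_def)
  show ?thesis
  proof (rule homotopic_with_eq[OF homotopy])
    fix z assume "z \<in> topspace ?U"
    moreover obtain x y where z: "z = (x, y)"
      by fastforce
    ultimately have xy: "(x, y) \<in> left_difference_preimage G T V"
      by (simp add: topspace_U)
    then show "((\<lambda>\<gamma>. (\<gamma> 0, \<gamma> 1)) \<circ> planner) z = K (0, z)"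
      by (simp add: z K_def planner_endpoints assms)
    show "id z = K (1, z)"
      using xy by (simp add: z K_def assms mem_left_difference_preimage)
  next
    fix k k' :: "'a \<times> 'a \<Rightarrow> 'a \<times> 'a"
    assume "\<And>z. z \<in> topspace ?U \<Longrightarrow> k z = k' z"
    then have eq: "\<And>z. z \<in> left_difference_preimage G T V \<Longrightarrow> k z = k' z"
      unfolding topspace_U .
    have "k (case z of (x, y) \<Rightarrow> (g \<otimes> x, g \<otimes> y)) = k' (case z of (x, y) \<Rightarrow> (g \<otimes> x, g \<otimes> y))"
      if "g \<in> carrier G" and "z \<in> left_difference_preimage G T V" for g z
      using that by (cases z) (simp add: eq left_difference_preimage_translate)
    with eq show "?Q k \<longleftrightarrow> ?Q k'"
      by (simp cong: ball_cong)
  qed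
qed

lemma equivariant_sectional_open_left_difference_preimage:
  assumes "pathin T \<omega>" and "\<omega> 0 = c" and "\<omega> 1 = \<one>"
  shows "left_equivariant_planning_open G T (left_difference_preimage G T V)"
  unfolding equivariant_sectional_open_def
proof (intro conjI exI[of _ planner])
  show "openin (prod_topology T T) (left_difference_preimage G T V)"
    by (rule openin_left_difference_preimage)
  show "\<forall>g\<in>carrier G. \<forall>z\<in>left_difference_preimage G T V.
          (case z of (x, y) \<Rightarrow> (g \<otimes> x, g \<otimes> y)) \<in> left_difference_preimage G T V"
    using left_difference_preimage_translate by auto
  show "continuous_map (subtopology (prod_topology T T) (left_difference_preimage G T V)) (path_space T) planner"
    by (rule continuous_map_planner)
  show "\<forall>g\<in>carrier G. \<forall>z\<in>left_difference_preimage G T V.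
          planner (case z of (x, y) \<Rightarrow> (g \<otimes> x, g \<otimes> y)) = (\<lambda>t\<in>{0..1}. g \<otimes> planner z t)"
    using planner_translate by auto
  show "homotopic_with
          (\<lambda>k. \<forall>g\<in>carrier G. \<forall>z\<in>left_difference_preimage G T V.
                 k (case z of (x, y) \<Rightarrow> (g \<otimes> x, g \<otimes> y)) = (case k z of (x, y) \<Rightarrow> (g \<otimes> x, g \<otimes> y)))
          (subtopology (prod_topology T T) (left_difference_preimage G T V)) (prod_topology T T)
          ((\<lambda>\<gamma>. (\<gamma> 0, \<gamma> 1)) \<circ> planner) id"
    by (rule homotopic_planner_endpoints_id[OF assms])
qed

end

lemma sectional_cover_of_categorical_cover:
  assumes tg: "topological_group G T" and conn: "connected_space T"
    and cover: "\<forall>i<k. categorical_open T (V i)" "(\<Union>i<k. V i) = topspace T"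
  shows "\<exists>U. (\<forall>i<k. left_equivariant_planning_open G T (U i)) \<and>
             (\<Union>i<k. U i) = topspace (prod_topology T T)"
proof -
  interpret group G
    using tg by (simp add: topological_group_def)
  have carrier: "carrier G = topspace T"
    using tg by (simp add: topological_group_def)
  have one: "\<one>\<^bsub>G\<^esub> \<in> topspace T"
    using tg by (rule topological_group_one_in_topspace)
  have "path_connected_space T"
    using path_connected_space_if_categorical_cover[OF conn cover] .
  have "left_equivariant_planning_open G T (left_difference_preimage G T (V i))" if "i < k" for i
  proof -
    have "categorical_open T (V i)" and "topspace T \<noteq> {}"
      using cover(1) \<open>i < k\<close> one by auto
    then obtain c where c: "c \<in> topspace T"
      and "homotopic_with (\<lambda>h. True) (subtopology T (V i)) T id (\<lambda>x. c)"
      by (rule categorical_open_obtains_const_in_topspace)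
    then obtain h where "contraction_in_topological_group G T (V i) c h"
      using tg cover(1) \<open>i < k\<close>
      unfolding homotopic_with_def contraction_in_topological_group_def categorical_open_def by auto
    moreover obtain \<omega> where "pathin T \<omega>" and "\<omega> 0 = c" and "\<omega> 1 = \<one>\<^bsub>G\<^esub>"
      using \<open>path_connected_space T\<close> c one unfolding path_connected_space_def by meson
    ultimately show ?thesis
      by (rule contraction_in_topological_group.equivariant_sectional_open_left_difference_preimage)
  qed
  moreover have "(\<Union>i<k. left_difference_preimage G T (V i)) = topspace (prod_topology T T)"
  proof
    show "(\<Union>i<k. left_difference_preimage G T (V i)) \<subseteq> topspace (prod_topology T T)"
      by (auto simp: left_difference_preimage_def)
    have "(x, y) \<in> (\<Union>i<k. left_difference_preimage G T (V i))"
      if "x \<in> topspace T" and "y \<in> topspace T" for x y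
    proof -
      have "inv\<^bsub>G\<^esub> x \<otimes>\<^bsub>G\<^esub> y \<in> (\<Union>i<k. V i)"
        using that cover(2) by (simp add: carrier[symmetric])
      with that show ?thesis
        by (auto simp: left_difference_preimage_def)
    qed
    then show "topspace (prod_topology T T) \<subseteq> (\<Union>i<k. left_difference_preimage G T (V i))"
      by auto
  qed
  ultimately show ?thesis
    by (intro exI[of _ "\<lambda>i. left_difference_preimage G T (V i)"]) simp
qed

theorem theorem5p11:
  fixes G :: "('a, 'b) monoid_scheme" and T :: "'a topology"
  assumes "topological_group G T"
    and "connected_space T"
    and "metrizable_space T"
    and "compact_space T"
    and "Hausdorff_space T"
  shows "TC_G G T (\<lambda>g x. g \<otimes>\<^bsub>G\<^esub> x) = LS_cat T"
proof -
  have one: "\<one>\<^bsub>G\<^esub> \<in> topspace T"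
    using assms(1) by (rule topological_group_one_in_topspace)
  have covers_iff:
    "(\<exists>U. (\<forall>i<k. left_equivariant_planning_open G T (U i)) \<and> (\<Union>i<k. U i) = topspace (prod_topology T T))
     \<longleftrightarrow> (\<exists>V. (\<forall>i<k. categorical_open T (V i)) \<and> (\<Union>i<k. V i) = topspace T)"
    (is "?planning_cover \<longleftrightarrow> ?categorical_cover") for k
  proof
    assume ?planning_cover
    then show ?categorical_cover
      by (elim exE conjE) (rule categorical_cover_of_sectional_cover[OF _ _ one])
  next
    assume ?categorical_cover
    then show ?planning_cover
      by (elim exE conjE) (rule sectional_cover_of_categorical_cover[OF assms(1,2)])
  qed
  show ?thesis
    unfolding TC_G_def secat_G_eq_Inf_sectional_covers LS_cat_eq_Inf_categorical_covers covers_iff ..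
qed

end
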